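(* Let $\mathcal{D}=\{t_1,\dots,t_n\}$ be a relational database whose tables are indexed according to a topological order of its (acyclic) foreign-key graph, with the relation $\preceq$ (affect-or-equal) defined below. For indices $i\le j$, we have $t_i\preceq t_j$ if and only if $t_i$ and $t_j$ are connected in the subgraph $\mathcal{G}_j$ of the foreign-key graph induced on the vertices $t_1,t_2,\dots,t_j$, where connectivity ignores edge directions and every table is considered connected to itself.
   Context: A relational database is a finite set of tables $t_1,\dots,t_n$. A foreign key constraint $\phi_{ij}$ means that table $t_i$ is a parent of table $t_j$ (i.e. $t_j$ references $t_i$); $\Phi_j$ denotes the set of all foreign key constraints on $t_j$. The foreign-key graph is the directed graph whose vertices are the tables, with an edge between $t_i$ and $t_j$ (directed from parent $t_i$ to child $t_j$) whenever some $\phi_{ij}\in\Phi_j$; it is assumed acyclic, and the indices are chosen according to a topological order, so that $\phi_{ij}\in\Phi_j$ implies $i<j$. Write $\mathbb{N}_m=\{1,2,\dots,m\}$. The relation ascend-or-equal $\preceq^*$ is defined by: $t_i\preceq^* t_j$ iff $i=j$, or there exists $k\in\mathbb{N}_n$ with $\phi_{ik}\in\Phi_k$ and $t_k\preceq^* t_j$. The relation affect-or-equal $\preceq$ is the (smallest) relation satisfying: $t_i\preceq t_j$ iff $t_i\preceq^* t_j$, or [$i<j$ and there exists $k\in\mathbb{N}_{j-1}\setminus\{i\}$ such that ($t_i\preceq t_k$ or $t_k\preceq t_i$) and $t_k\preceq t_j$]. *)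

theory Defs
  imports Main
begin

text \<open>Tables are t_1,...,t_n, identified with their indices 1..n.
  fk i j means the foreign key constraint phi_ij is in Phi_j, i.e. t_i is a parent of t_j.\<close>

definition topo_fk :: "nat \<Rightarrow> (nat \<Rightarrow> nat \<Rightarrow> bool) \<Rightarrow> bool" where
  "topo_fk n fk \<longleftrightarrow> (\<forall>i j. fk i j \<longrightarrow> 1 \<le> i \<and> i < j \<and> j \<le> n)"

inductive asc :: "nat \<Rightarrow> (nat \<Rightarrow> nat \<Rightarrow> bool) \<Rightarrow> nat \<Rightarrow> nat \<Rightarrow> bool"
  for n fk where
  asc_refl: "asc n fk i i"
| asc_step: "k \<in> {1..n} \<Longrightarrow> fk i k \<Longrightarrow> asc n fk k j \<Longrightarrow> asc n fk i j"

inductive aff :: "nat \<Rightarrow> (nat \<Rightarrow> nat \<Rightarrow> bool) \<Rightarrow> nat \<Rightarrow> nat \<Rightarrow> bool"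
  for n fk where
  aff_asc: "asc n fk i j \<Longrightarrow> aff n fk i j"
| aff_step: "i < j \<Longrightarrow> k \<in> {1..j-1} - {i} \<Longrightarrow> aff n fk i k \<or> aff n fk k i
             \<Longrightarrow> aff n fk k j \<Longrightarrow> aff n fk i j"

definition sub_edge :: "(nat \<Rightarrow> nat \<Rightarrow> bool) \<Rightarrow> nat \<Rightarrow> nat \<Rightarrow> nat \<Rightarrow> bool" where
  "sub_edge fk j x y \<longleftrightarrow> x \<in> {1..j} \<and> y \<in> {1..j} \<and> (fk x y \<or> fk y x)"

definition connected_in :: "(nat \<Rightarrow> nat \<Rightarrow> bool) \<Rightarrow> nat \<Rightarrow> nat \<Rightarrow> nat \<Rightarrow> bool" where
  "connected_in fk j x y \<longleftrightarrow> (sub_edge fk j)\<^sup>*\<^sup>* x y"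

end

theory Submission
  imports Defs
begin

text \<open>Both asc and aff only relate a smaller index to a larger one. Each clause of their
  definitions either adds an edge of G_j or glues two connections that live in G_k or G_i with
  k, i < j, so every pair i \<le> j related by aff is connected in G_j. Conversely, walk along a
  path from i to j in G_j: an edge x -- w makes one endpoint a parent of the other, hence x and w
  are comparable under aff, and the rest of the path gives aff w j by induction; the clause
  aff_step with k = w then yields aff x j, unless w = j, in which case x is a parent of j.\<close>

lemma symp_sub_edge: "symp (sub_edge fk j)"
  by (auto simp: sub_edge_def intro: sympI)

lemma connected_in_sym: "connected_in fk j x y \<Longrightarrow> connected_in fk j y x"
  unfolding connected_in_def by (rule sympD[OF symp_rtranclp[OF symp_sub_edge]])

lemma connected_in_trans:
  "connected_in fk j x y \<Longrightarrow> connected_in fk j y z \<Longrightarrow> connected_in fk j x z"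
  unfolding connected_in_def by (rule rtranclp_trans)

lemma connected_in_mono:
  assumes "connected_in fk a x y" and "a \<le> b"
  shows "connected_in fk b x y"
proof -
  have "sub_edge fk a \<le> sub_edge fk b"
    using \<open>a \<le> b\<close> by (auto simp: sub_edge_def)
  then show ?thesis
    using assms(1) unfolding connected_in_def by (metis rtranclp_mono predicate2D)
qed

lemma fk_imp_asc:
  assumes "topo_fk n fk" and "fk i k"
  shows "asc n fk i k"
proof -
  have "k \<in> {1..n}"
    using assms unfolding topo_fk_def by force
  with \<open>fk i k\<close> show ?thesis by (blast intro: asc_step asc_refl)
qed

lemma asc_imp_le_connected:
  assumes "topo_fk n fk" and "asc n fk i j"
  shows "i \<le> j \<and> connected_in fk j i j"
  using assms(2)
proof (induction rule: asc.induct)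
  case (asc_refl i)
  then show ?case by (simp add: connected_in_def)
next
  case (asc_step k i j)
  then have "1 \<le> i" "i < k"
    using assms(1) by (auto simp: topo_fk_def)
  with asc_step have "sub_edge fk j i k"
    by (auto simp: sub_edge_def)
  with asc_step \<open>i < k\<close> show ?case
    unfolding connected_in_def by (auto intro: converse_rtranclp_into_rtranclp)
qed

lemma aff_imp_le_connected:
  assumes "topo_fk n fk" and "aff n fk i j"
  shows "i \<le> j \<and> connected_in fk j i j"
  using assms(2)
proof (induction rule: aff.induct)
  case (aff_asc i j)
  then show ?case using asc_imp_le_connected[OF assms(1)] by blast
next
  case (aff_step i j k)
  then have "k < j" by auto
  have "connected_in fk j i k"
    using aff_step.IH(1)
  proof
    assume "aff n fk i k \<and> i \<le> k \<and> connected_in fk k i k"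
    with \<open>k < j\<close> show ?thesis by (auto intro: connected_in_mono)
  next
    assume "aff n fk k i \<and> k \<le> i \<and> connected_in fk i k i"
    with \<open>i < j\<close> show ?thesis by (auto intro: connected_in_mono connected_in_sym)
  qed
  with aff_step.IH(2) \<open>i < j\<close> show ?case
    by (auto intro: connected_in_trans)
qed

lemma sub_edge_imp_aff_either:
  assumes "topo_fk n fk" and "sub_edge fk j x y"
  shows "aff n fk x y \<or> aff n fk y x"
  using assms by (auto simp: sub_edge_def intro: aff_asc fk_imp_asc)

lemma connected_imp_aff:
  assumes "topo_fk n fk" and "connected_in fk j x j"
  shows "aff n fk x j"
  using assms(2) unfolding connected_in_def
proof (induction rule: converse_rtranclp_induct)
  case base
  show ?case by (rule aff_asc[OF asc_refl])
next
  case (step x w)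
  have edge: "sub_edge fk j x w" by fact
  show ?case
  proof (cases "x = j")
    case True
    then show ?thesis by (simp add: aff_asc asc_refl)
  next
    case False
    with edge have "x < j" by (auto simp: sub_edge_def)
    show ?thesis
    proof (cases "w = j")
      case True
      with edge \<open>x < j\<close> assms(1) have "fk x j"
        unfolding sub_edge_def topo_fk_def by (metis less_asym)
      then show ?thesis by (rule aff_asc[OF fk_imp_asc[OF assms(1)]])
    next
      case False
      from edge assms(1) have "w \<noteq> x"
        by (auto simp: sub_edge_def topo_fk_def)
      with edge \<open>w \<noteq> j\<close> have "w \<in> {1..j-1} - {x}"
        by (auto simp: sub_edge_def)
      with \<open>x < j\<close> sub_edge_imp_aff_either[OF assms(1) edge] step.IH show ?thesis
        by (blast intro: aff_step)
    qed
  qed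
qed

theorem lemma3p4:
  fixes n :: nat and fk :: "nat \<Rightarrow> nat \<Rightarrow> bool" and i j :: nat
  assumes "topo_fk n fk"
    and "1 \<le> i" and "i \<le> j" and "j \<le> n"
  shows "aff n fk i j \<longleftrightarrow> connected_in fk j i j"
  using aff_imp_le_connected[OF assms(1)] connected_imp_aff[OF assms(1)] by blast

end
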